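(* Let $s,t,r>1$ be integers and let $G=C_s * C_t$ be the free product of cyclic groups of orders $s$ and $t$. For every $w\in G$, the normal closure of $w^r$ in $G$ is a proper subgroup of $G$. *)

theory Defs
  imports "HOL-Algebra.Algebra"
begin

text \<open>The free product C_s * C_t, realised concretely by reduced words.
  A letter Inl i (0 < i < s) stands for a^i, where a generates C_s = Z/sZ;
  a letter Inr j (0 < j < t) stands for b^j, where b generates C_t = Z/tZ.\<close>

definition fp_letter :: "nat \<Rightarrow> nat \<Rightarrow> nat + nat \<Rightarrow> bool" where
  "fp_letter s t x = (case x of Inl i \<Rightarrow> 0 < i \<and> i < s | Inr j \<Rightarrow> 0 < j \<and> j < t)"

definition fp_reduced :: "nat \<Rightarrow> nat \<Rightarrow> (nat + nat) list \<Rightarrow> bool" where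
  "fp_reduced s t w = ((\<forall>x \<in> set w. fp_letter s t x) \<and> successively (\<lambda>x y. isl x \<noteq> isl y) w)"

fun fp_ins :: "nat \<Rightarrow> nat \<Rightarrow> nat + nat \<Rightarrow> (nat + nat) list \<Rightarrow> (nat + nat) list" where
  "fp_ins s t x [] = [x]"
| "fp_ins s t (Inl i) (Inl j # w) =
     (if (i + j) mod s = 0 then w else Inl ((i + j) mod s) # w)"
| "fp_ins s t (Inr i) (Inr j # w) =
     (if (i + j) mod t = 0 then w else Inr ((i + j) mod t) # w)"
| "fp_ins s t x (y # w) = x # y # w"

definition fp_mult :: "nat \<Rightarrow> nat \<Rightarrow> (nat + nat) list \<Rightarrow> (nat + nat) list \<Rightarrow> (nat + nat) list" where
  "fp_mult s t u v = foldr (fp_ins s t) u v"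

definition free_prod_cyclic :: "nat \<Rightarrow> nat \<Rightarrow> (nat + nat) list monoid" where
  "free_prod_cyclic s t =
     \<lparr> carrier = {w. fp_reduced s t w}, monoid.mult = fp_mult s t, one = [] \<rparr>"

definition normal_closure :: "('a, 'b) monoid_scheme \<Rightarrow> 'a set \<Rightarrow> 'a set" where
  "normal_closure G S =
     generate G (\<Union>g \<in> carrier G. (\<lambda>x. g \<otimes>\<^bsub>G\<^esub> x \<otimes>\<^bsub>G\<^esub> inv\<^bsub>G\<^esub> g) ` S)"

end

theory Submission
  imports
    Defs
    "HOL-Analysis.Complex_Transcendental"
    "HOL-Computational_Algebra.Fundamental_Theorem_Algebra"
begin

text \<open>
  Two complex 2x2 matrices P, Q with P^s = +-1 and
  Q^t = +-1 define a homomorphism from G to PSL(2,C); its kernel N is a normal subgroup, proper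
  unless P and Q are both +-1.  Every w is conjugate to a cyclically reduced word c, so it
  suffices to find such a nontrivial representation in which c^r is +-1: then w^r, and with it
  the whole normal closure, lies in N.  For c of length at most one this is immediate.
  Otherwise c alternates between the two factors, with length 2n > 0, and we send the
  generators to A = [[u, 1], [0, 1/u]] and B = [[v, 0], [lam, 1/v]], where u and v are primitive
  2s-th and 2t-th roots of unity.  The trace of the image of c is a polynomial of degree n in
  lam, so lam can be chosen to make it z + 1/z for a primitive 2r-th root of unity z, and by
  Cayley-Hamilton a matrix of determinant 1 with this trace has r-th power -1.
\<close>

lemma (in group) conj_nat_pow:
  assumes "g \<in> carrier G" "c \<in> carrier G"
  shows "(g \<otimes> c \<otimes> inv g) [^] (n::nat) = g \<otimes> c [^] n \<otimes> inv g"
proof (induction n)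
  case (Suc n)
  have cancel: "inv g \<otimes> (g \<otimes> y) = y" if "y \<in> carrier G" for y
    using assms that by (simp add: m_assoc[symmetric])
  have "(g \<otimes> c \<otimes> inv g) [^] Suc n = g \<otimes> c [^] n \<otimes> inv g \<otimes> (g \<otimes> c \<otimes> inv g)"
    by (simp add: Suc)
  also have "\<dots> = g \<otimes> c [^] Suc n \<otimes> inv g"
    using assms by (simp add: m_assoc cancel)
  finally show ?case .
qed (use assms in simp)

lemma normal_closure_subset:
  assumes "group G" "N \<lhd> G" "S \<subseteq> N"
  shows "normal_closure G S \<subseteq> N"
proof -
  interpret group G by fact
  have conj: "g \<otimes>\<^bsub>G\<^esub> x \<otimes>\<^bsub>G\<^esub> inv\<^bsub>G\<^esub> g \<in> N" if "g \<in> carrier G" "x \<in> S" for g x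
    using assms(3) that normal.inv_op_closed2[OF assms(2)] by blast
  show ?thesis
    unfolding normal_closure_def
  proof (rule generate_subgroup_incl)
    show "(\<Union>g\<in>carrier G. (\<lambda>x. g \<otimes>\<^bsub>G\<^esub> x \<otimes>\<^bsub>G\<^esub> inv\<^bsub>G\<^esub> g) ` S) \<subseteq> N"
      using conj by blast
  qed (rule normal_imp_subgroup[OF assms(2)])
qed

section \<open>The group C_s * C_t of reduced words\<close>

text \<open>A letter is described uniformly by its factor (isl), its exponent, and the order of
  its factor; this lets one argument cover both factors.\<close>

definition fp_exp :: "nat + nat \<Rightarrow> nat" where
  "fp_exp x = case_sum id id x"

definition fp_ord :: "nat \<Rightarrow> nat \<Rightarrow> nat + nat \<Rightarrow> nat" where
  "fp_ord s t x = (if isl x then s else t)"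

definition fp_with_exp :: "nat + nat \<Rightarrow> nat \<Rightarrow> nat + nat" where
  "fp_with_exp x k = map_sum (\<lambda>_. k) (\<lambda>_. k) x"

lemma fp_with_exp_simps [simp]:
  "isl (fp_with_exp x k) = isl x" "fp_exp (fp_with_exp x k) = k"
  "fp_ord s t (fp_with_exp x k) = fp_ord s t x"
  by (cases x; simp add: fp_with_exp_def fp_exp_def fp_ord_def)+

lemma fp_with_exp_twice [simp]: "fp_with_exp (fp_with_exp x k) l = fp_with_exp x l"
  by (cases x) (simp_all add: fp_with_exp_def)

lemma fp_with_exp_self [simp]: "fp_with_exp x (fp_exp x) = x"
  by (cases x) (simp_all add: fp_with_exp_def fp_exp_def)

lemma fp_letter_iff: "fp_letter s t x \<longleftrightarrow> 0 < fp_exp x \<and> fp_exp x < fp_ord s t x"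
  by (cases x) (simp_all add: fp_letter_def fp_exp_def fp_ord_def)

lemma fp_letter_eqI: "isl x = isl y \<Longrightarrow> fp_exp x = fp_exp y \<Longrightarrow> x = y"
  by (cases x; cases y) (simp_all add: fp_exp_def)

lemma fp_ins_Cons:
  "fp_ins s t x (y # w) =
     (if isl x = isl y then
        (let k = (fp_exp x + fp_exp y) mod fp_ord s t x in
         if k = 0 then w else fp_with_exp x k # w)
      else x # y # w)"
  by (cases x; cases y) (simp_all add: fp_exp_def fp_ord_def fp_with_exp_def Let_def)

lemma fp_reduced_Cons:
  "fp_reduced s t (x # w) \<longleftrightarrow>
     fp_letter s t x \<and> fp_reduced s t w \<and> (w = [] \<or> isl x \<noteq> isl (hd w))"
  unfolding fp_reduced_def by (auto simp: successively_Cons)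

lemma fp_reduced_snoc:
  "fp_reduced s t (w @ [y]) \<longleftrightarrow>
     fp_reduced s t w \<and> fp_letter s t y \<and> (w = [] \<or> isl (last w) \<noteq> isl y)"
  unfolding fp_reduced_def by (auto simp: successively_append_iff)

lemma fp_reduced_Nil [simp]: "fp_reduced s t []"
  by (simp add: fp_reduced_def)

lemma fp_ins_reduced_Cons: "fp_reduced s t (x # w) \<Longrightarrow> fp_ins s t x w = x # w"
  by (cases w) (auto simp: fp_ins_Cons fp_reduced_Cons)

lemma fp_reduced_ins:
  assumes "fp_letter s t x" "fp_reduced s t w"
  shows "fp_reduced s t (fp_ins s t x w)"
proof (cases w)
  case (Cons y w')
  have "(fp_exp x + fp_exp y) mod fp_ord s t x < fp_ord s t x"
    using assms(1) by (simp add: fp_letter_iff)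
  then show ?thesis
    using assms Cons by (auto simp: fp_ins_Cons fp_reduced_Cons fp_letter_iff Let_def)
qed (use assms in \<open>simp add: fp_reduced_Cons\<close>)

lemma sum_mod_eq_0:
  fixes a b n :: nat
  assumes "a < n" "b < n" "0 < a + b" "(a + b) mod n = 0"
  shows "a + b = n"
proof -
  have "n \<le> a + b" using assms by (metis mod_less not_le neq0_conv)
  then have "(a + b) mod n = a + b - n" using assms by (simp add: le_mod_geq)
  then show ?thesis using assms \<open>n \<le> a + b\<close> by simp
qed

lemma exponent_merge:
  fixes i j m n :: nat
  assumes "0 < i" "i < n" "0 < j" "j < n" "0 < m" "m < n"
  shows "(i + (j + m) mod n) mod n = ((i + j) mod n + m) mod n"
    and "(j + m) mod n = 0 \<Longrightarrow> (i + j) mod n = 0 \<longleftrightarrow> i = m"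
    and "(j + m) mod n = 0 \<Longrightarrow> ((i + j) mod n + m) mod n = i"
    and "(i + j) mod n = 0 \<Longrightarrow> (i + (j + m) mod n) mod n = m"
proof -
  show shift: "(i + (j + m) mod n) mod n = ((i + j) mod n + m) mod n"
    by (metis mod_add_right_eq mod_add_left_eq add.assoc)
  show "(i + j) mod n = 0 \<longleftrightarrow> i = m" if "(j + m) mod n = 0"
    using sum_mod_eq_0[of j n m] sum_mod_eq_0[of i n j] that assms by (auto simp: add.commute)
  show "((i + j) mod n + m) mod n = i" if "(j + m) mod n = 0"
    using shift that assms by simp
  show "(i + (j + m) mod n) mod n = m" if "(i + j) mod n = 0"
    using shift that assms by simp
qed

lemma fp_ins_ins:
  assumes q: "fp_reduced s t q" and x: "fp_letter s t x" and y: "fp_letter s t y"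
    and xy: "isl x = isl y"
  shows "fp_ins s t x (fp_ins s t y q) =
    (let k = (fp_exp x + fp_exp y) mod fp_ord s t x in
     if k = 0 then q else fp_ins s t (fp_with_exp x k) q)"
proof (cases "q \<noteq> [] \<and> isl (hd q) = isl x")
  case False
  then show ?thesis using xy
    by (cases q) (auto simp: fp_ins_Cons Let_def)
next
  case True
  then obtain z q' where qz: "q = z # q'" and zx: "isl z = isl x"
    by (cases q) auto
  let ?o = "fp_ord s t x" and ?i = "fp_exp x" and ?j = "fp_exp y" and ?m = "fp_exp z"
  have ord: "fp_ord s t y = ?o" "fp_ord s t z = ?o"
    using xy zx by (simp_all add: fp_ord_def)
  have bounds: "0 < ?i" "?i < ?o" "0 < ?j" "?j < ?o" "0 < ?m" "?m < ?o"
    using x y q qz ord by (auto simp: fp_letter_iff fp_reduced_Cons)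
  note arith = exponent_merge[OF bounds]
  have q': "fp_ins s t x' q' = x' # q'" if "isl x' = isl x" for x'
    using q qz zx that by (cases q') (auto simp: fp_ins_Cons fp_reduced_Cons)
  have y_step: "fp_ins s t y q =
      (if (?j + ?m) mod ?o = 0 then q' else fp_with_exp y ((?j + ?m) mod ?o) # q')"
    using qz xy zx ord by (simp add: fp_ins_Cons Let_def)
  have z: "fp_with_exp x ?m = z" "x = z \<longleftrightarrow> ?i = ?m"
    using zx fp_letter_eqI[of x z] fp_letter_eqI[of "fp_with_exp x ?m" z] by auto
  show ?thesis
  proof (cases "(?j + ?m) mod ?o = 0")
    case cancel: True
    then have lhs: "fp_ins s t x (fp_ins s t y q) = x # q'"
      using y_step q' by simp
    show ?thesis
    proof (cases "?i = ?m")
      case True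
      then show ?thesis using lhs qz z arith(2)[OF cancel] by simp
    next
      case False
      then show ?thesis
        using lhs qz zx bounds(1) arith(2,3)[OF cancel] by (simp add: fp_ins_Cons Let_def)
    qed
  next
    case False
    then have "fp_ins s t x (fp_ins s t y q) =
      (let k = (?i + (?j + ?m) mod ?o) mod ?o in if k = 0 then q' else fp_with_exp x k # q')"
      using y_step xy by (simp add: fp_ins_Cons Let_def)
    then show ?thesis
      using arith(1,4) bounds qz zx z by (auto simp: fp_ins_Cons Let_def)
  qed
qed

lemma fp_reduced_mult:
  assumes "fp_reduced s t u" "fp_reduced s t v"
  shows "fp_reduced s t (fp_mult s t u v)"
  using assms unfolding fp_mult_def
  by (induction u) (auto simp: fp_reduced_Cons fp_reduced_ins)

lemma fp_mult_ins:
  assumes x: "fp_letter s t x" and z: "fp_reduced s t z" and w: "fp_reduced s t w"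
  shows "fp_mult s t (fp_ins s t x z) w = fp_ins s t x (fp_mult s t z w)"
proof (cases z)
  case (Cons y z')
  have y: "fp_letter s t y" and z': "fp_reduced s t z'"
    using z Cons by (auto simp: fp_reduced_Cons)
  have zw: "fp_reduced s t (fp_mult s t z' w)"
    using fp_reduced_mult[OF z' w] .
  show ?thesis
  proof (cases "isl x = isl y")
    case True
    then show ?thesis
      using fp_ins_ins[OF zw x y True] Cons by (simp add: fp_ins_Cons fp_mult_def Let_def)
  qed (use Cons in \<open>simp add: fp_ins_Cons fp_mult_def\<close>)
qed (simp add: fp_mult_def)

lemma fp_mult_assoc:
  assumes "fp_reduced s t u" "fp_reduced s t v" "fp_reduced s t w"
  shows "fp_mult s t (fp_mult s t u v) w = fp_mult s t u (fp_mult s t v w)"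
  using assms
proof (induction u)
  case (Cons x u)
  have u: "fp_reduced s t u" and x: "fp_letter s t x"
    using Cons.prems by (auto simp: fp_reduced_Cons)
  have "fp_mult s t (fp_mult s t (x # u) v) w = fp_mult s t (fp_ins s t x (fp_mult s t u v)) w"
    by (simp add: fp_mult_def)
  also have "\<dots> = fp_ins s t x (fp_mult s t (fp_mult s t u v) w)"
    using fp_mult_ins[OF x fp_reduced_mult[OF u Cons.prems(2)] Cons.prems(3)] .
  also have "\<dots> = fp_mult s t (x # u) (fp_mult s t v w)"
    using Cons.IH[OF u Cons.prems(2,3)] by (simp add: fp_mult_def)
  finally show ?case .
qed (simp add: fp_mult_def)

definition fp_inv_letter :: "nat \<Rightarrow> nat \<Rightarrow> nat + nat \<Rightarrow> nat + nat" where
  "fp_inv_letter s t x = fp_with_exp x (fp_ord s t x - fp_exp x)"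

lemma fp_inv_letter_cancel:
  "fp_letter s t x \<Longrightarrow> fp_ins s t (fp_inv_letter s t x) (x # u) = u"
  by (simp add: fp_inv_letter_def fp_ins_Cons fp_letter_iff)

lemma fp_reduced_inv_word:
  assumes "fp_reduced s t u"
  shows "fp_reduced s t (rev (map (fp_inv_letter s t) u))"
proof -
  have "isl (fp_inv_letter s t x) = isl x" for x
    by (simp add: fp_inv_letter_def)
  moreover have "fp_letter s t (fp_inv_letter s t x)" if "fp_letter s t x" for x
    using that by (simp add: fp_inv_letter_def fp_letter_iff)
  ultimately show ?thesis
    using assms unfolding fp_reduced_def
    by (auto simp: successively_map elim!: successively_mono)
qed

lemma fp_mult_inv_word:
  assumes "fp_reduced s t u"
  shows "fp_mult s t (rev (map (fp_inv_letter s t) u)) u = []"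
  using assms
proof (induction u)
  case (Cons x u)
  then show ?case
    using fp_inv_letter_cancel[of s t x u] by (auto simp: fp_mult_def fp_reduced_Cons)
qed (simp add: fp_mult_def)

lemma fp_group: "group (free_prod_cyclic s t)"
proof (rule groupI)
  fix x y assume "x \<in> carrier (free_prod_cyclic s t)" "y \<in> carrier (free_prod_cyclic s t)"
  then show "x \<otimes>\<^bsub>free_prod_cyclic s t\<^esub> y \<in> carrier (free_prod_cyclic s t)"
    by (simp add: free_prod_cyclic_def fp_reduced_mult)
next
  fix x y z
  assume "x \<in> carrier (free_prod_cyclic s t)" "y \<in> carrier (free_prod_cyclic s t)"
    "z \<in> carrier (free_prod_cyclic s t)"
  then show "x \<otimes>\<^bsub>free_prod_cyclic s t\<^esub> y \<otimes>\<^bsub>free_prod_cyclic s t\<^esub> z =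
        x \<otimes>\<^bsub>free_prod_cyclic s t\<^esub> (y \<otimes>\<^bsub>free_prod_cyclic s t\<^esub> z)"
    by (simp add: free_prod_cyclic_def fp_mult_assoc)
next
  fix x assume "x \<in> carrier (free_prod_cyclic s t)"
  then show "\<exists>y\<in>carrier (free_prod_cyclic s t).
      y \<otimes>\<^bsub>free_prod_cyclic s t\<^esub> x = \<one>\<^bsub>free_prod_cyclic s t\<^esub>"
    by (intro bexI[of _ "rev (map (fp_inv_letter s t) x)"])
      (auto simp: free_prod_cyclic_def fp_mult_inv_word fp_reduced_inv_word)
qed (simp_all add: free_prod_cyclic_def fp_mult_def)

subsection \<open>Conjugation to a cyclically reduced word\<close>

lemma length_fp_ins: "length (fp_ins s t x w) \<le> Suc (length w)"
  by (cases w) (simp_all add: fp_ins_Cons Let_def)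

lemma length_fp_mult: "length (fp_mult s t u v) \<le> length u + length v"
  unfolding fp_mult_def
proof (induction u)
  case (Cons x u)
  then show ?case
    using length_fp_ins[of s t x "foldr (fp_ins s t) u v"] by simp
qed simp

text \<open>A reduced word is cyclically reduced if it has at most one letter or its first and
  last letters lie in different factors (a reduced word of the latter kind has even length).\<close>

definition fp_cyclically_reduced :: "(nat + nat) list \<Rightarrow> bool" where
  "fp_cyclically_reduced w \<longleftrightarrow> length w \<le> 1 \<or> isl (hd w) \<noteq> isl (last w)"

lemma fp_conj_shorter:
  fixes s t :: nat and G (structure)
  defines "G \<equiv> free_prod_cyclic s t"
  assumes w: "x # w1 @ [y] \<in> carrier G" and xy: "isl x = isl y"
  shows "\<exists>c \<in> carrier G. length c < length (x # w1 @ [y]) \<and> x # w1 @ [y] = [x] \<otimes> c \<otimes> inv [x]"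
proof -
  interpret group G unfolding G_def by (rule fp_group)
  have carrier: "carrier G = {w. fp_reduced s t w}" and mult: "\<And>u v. u \<otimes> v = fp_mult s t u v"
    by (simp_all add: G_def free_prod_cyclic_def)
  define m where "m = w1 @ [y]"
  have red: "fp_reduced s t (x # m)" using w by (simp add: carrier m_def)
  then have x: "[x] \<in> carrier G" and m: "m \<in> carrier G"
    by (simp_all add: carrier fp_reduced_Cons)
  have w_eq: "x # w1 @ [y] = [x] \<otimes> m"
    using fp_ins_reduced_Cons[OF red] by (simp add: mult fp_mult_def m_def)
  define c where "c = m \<otimes> [x]"
  have "c = fp_mult s t w1 (fp_ins s t y [x])"
    by (simp add: c_def m_def mult fp_mult_def)
  moreover have "length (fp_ins s t y [x]) \<le> 1"
    using xy by (simp add: fp_ins_Cons Let_def)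
  ultimately have "length c < length (x # w1 @ [y])"
    using length_fp_mult[of s t w1 "fp_ins s t y [x]"] by simp
  moreover have "x # w1 @ [y] = [x] \<otimes> c \<otimes> inv [x]"
    using w_eq m x by (simp add: c_def m_assoc)
  moreover have "c \<in> carrier G" using m x by (simp add: c_def)
  ultimately show ?thesis by blast
qed

lemma fp_conj_cyclically_reduced:
  fixes s t :: nat and G (structure)
  defines "G \<equiv> free_prod_cyclic s t"
  assumes "w \<in> carrier G"
  shows "\<exists>g \<in> carrier G. \<exists>c \<in> carrier G. fp_cyclically_reduced c \<and> w = g \<otimes> c \<otimes> inv g"
  using assms(2)
proof (induction "length w" arbitrary: w rule: less_induct)
  case less
  interpret group G unfolding G_def by (rule fp_group)
  show ?case
  proof (cases "fp_cyclically_reduced w")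
    case True
    have "w = \<one> \<otimes> w \<otimes> inv \<one>" using less.prems by simp
    then show ?thesis using True less.prems by blast
  next
    case False
    then obtain x w' where "w = x # w'" and "w' \<noteq> []"
      by (cases w) (auto simp: fp_cyclically_reduced_def)
    then obtain w1 y where w: "w = x # w1 @ [y]"
      by (cases w' rule: rev_exhaust) auto
    then have "isl x = isl y"
      using False by (simp add: fp_cyclically_reduced_def)
    then obtain c' where c': "c' \<in> carrier G" "length c' < length w" "w = [x] \<otimes> c' \<otimes> inv [x]"
      using fp_conj_shorter[of x w1 y s t] less.prems w by (auto simp: G_def)
    then obtain g c where g: "g \<in> carrier G" and c: "c \<in> carrier G"
      "fp_cyclically_reduced c" and c'_eq: "c' = g \<otimes> c \<otimes> inv g"
      using less.hyps by blast
    have x: "[x] \<in> carrier G"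
      using less.prems w by (simp add: G_def free_prod_cyclic_def fp_reduced_Cons)
    have "w = ([x] \<otimes> g) \<otimes> c \<otimes> inv ([x] \<otimes> g)"
      using x g c by (simp add: c'(3) c'_eq m_assoc inv_mult_group)
    then show ?thesis using x g c by blast
  qed
qed

section \<open>2x2 matrices up to sign\<close>

text \<open>A 2x2 matrix [[a, b], [c, d]] is represented by the tuple (a, b, c, d).\<close>

type_synonym 'a mat2 = "'a \<times> 'a \<times> 'a \<times> 'a"

fun mmul :: "'a::comm_ring_1 mat2 \<Rightarrow> 'a mat2 \<Rightarrow> 'a mat2" where
  "mmul (a, b, c, d) (e, f, g, h) = (a*e + b*g, a*f + b*h, c*e + d*g, c*f + d*h)"

definition mone :: "'a::comm_ring_1 mat2" where
  "mone = (1, 0, 0, 1)"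

fun mneg :: "'a::comm_ring_1 mat2 \<Rightarrow> 'a mat2" where
  "mneg (a, b, c, d) = (-a, -b, -c, -d)"

fun mtrace :: "'a::comm_ring_1 mat2 \<Rightarrow> 'a" where
  "mtrace (a, b, c, d) = a + d"

fun mdet :: "'a::comm_ring_1 mat2 \<Rightarrow> 'a" where
  "mdet (a, b, c, d) = a * d - b * c"

fun mpow :: "'a::comm_ring_1 mat2 \<Rightarrow> nat \<Rightarrow> 'a mat2" where
  "mpow M 0 = mone"
| "mpow M (Suc n) = mmul (mpow M n) M"

lemma mmul_assoc: "mmul (mmul A B) C = mmul A (mmul B C)"
  by (cases A rule: prod_cases4; cases B rule: prod_cases4; cases C rule: prod_cases4)
    (simp add: algebra_simps)

lemma mmul_mone [simp]: "mmul mone A = A" "mmul A mone = A"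
  by (cases A rule: prod_cases4, simp add: mone_def)+

lemma mneg_mneg [simp]: "mneg (mneg A) = A"
  by (cases A rule: prod_cases4) simp

lemma mmul_mneg [simp]: "mmul (mneg A) B = mneg (mmul A B)" "mmul A (mneg B) = mneg (mmul A B)"
  by (cases A rule: prod_cases4, cases B rule: prod_cases4, simp add: algebra_simps)+

lemma mtrace_mmul_commute: "mtrace (mmul A B) = mtrace (mmul B A)"
  by (cases A rule: prod_cases4; cases B rule: prod_cases4) (simp add: algebra_simps)

lemma mdet_mmul [simp]: "mdet (mmul A B) = mdet A * mdet B"
  by (cases A rule: prod_cases4; cases B rule: prod_cases4) (simp add: algebra_simps)

lemma mdet_mone [simp]: "mdet mone = 1"
  by (simp add: mone_def)

lemma mdet_mpow: "mdet M = 1 \<Longrightarrow> mdet (mpow M n) = 1"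
  by (induction n) simp_all

lemma mpow_add: "mpow M (m + n) = mmul (mpow M m) (mpow M n)"
  by (induction n) (simp_all add: mmul_assoc)

lemma mpow_mone [simp]: "mpow mone n = mone"
  by (induction n) simp_all

text \<open>Equality up to sign, i.e. equality of the images in PSL(2).\<close>

definition pm_eq :: "'a::comm_ring_1 mat2 \<Rightarrow> 'a mat2 \<Rightarrow> bool" where
  "pm_eq A B \<longleftrightarrow> A = B \<or> A = mneg B"

lemma pm_eq_refl [simp]: "pm_eq A A"
  by (simp add: pm_eq_def)

lemma pm_eq_sym: "pm_eq A B \<Longrightarrow> pm_eq B A"
  by (auto simp: pm_eq_def)

lemma pm_eq_trans [trans]: "pm_eq A B \<Longrightarrow> pm_eq B C \<Longrightarrow> pm_eq A C"
  by (auto simp: pm_eq_def)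

lemma pm_eq_mmul: "pm_eq A A' \<Longrightarrow> pm_eq B B' \<Longrightarrow> pm_eq (mmul A B) (mmul A' B')"
  unfolding pm_eq_def by (elim disjE) simp_all

lemma mpow_mod:
  assumes "pm_eq (mpow M k) mone"
  shows "pm_eq (mpow M n) (mpow M (n mod k))"
proof -
  have multiple: "pm_eq (mpow M (k * q)) mone" for q
  proof (induction q)
    case (Suc q)
    then show ?case
      using pm_eq_mmul[OF assms Suc] by (simp add: mpow_add)
  qed simp
  then show ?thesis
    using pm_eq_mmul[OF multiple pm_eq_refl, of "n div k" "mpow M (n mod k)"]
    by (simp add: mpow_add[symmetric])
qed

section \<open>Projective representations of C_s * C_t\<close>

definition letter_mat :: "'a::comm_ring_1 mat2 \<Rightarrow> 'a mat2 \<Rightarrow> nat + nat \<Rightarrow> 'a mat2" where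
  "letter_mat P Q x = mpow (if isl x then P else Q) (fp_exp x)"

definition word_mat :: "'a::comm_ring_1 mat2 \<Rightarrow> 'a mat2 \<Rightarrow> (nat + nat) list \<Rightarrow> 'a mat2" where
  "word_mat P Q w = foldr (\<lambda>x M. mmul (letter_mat P Q x) M) w mone"

lemma letter_mat_simps [simp]:
  "letter_mat P Q (Inl i) = mpow P i" "letter_mat P Q (Inr j) = mpow Q j"
  by (simp_all add: letter_mat_def fp_exp_def)

lemma word_mat_simps [simp]:
  "word_mat P Q [] = mone" "word_mat P Q (x # w) = mmul (letter_mat P Q x) (word_mat P Q w)"
  by (simp_all add: word_mat_def)

lemma word_mat_append: "word_mat P Q (u @ v) = mmul (word_mat P Q u) (word_mat P Q v)"
  by (induction u) (simp_all add: mmul_assoc)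

text \<open>The pair defines a homomorphism to PSL(2) exactly when P^s and Q^t are +-1.\<close>

definition proj_rep :: "nat \<Rightarrow> nat \<Rightarrow> 'a::comm_ring_1 mat2 \<Rightarrow> 'a mat2 \<Rightarrow> bool" where
  "proj_rep s t P Q \<longleftrightarrow> pm_eq (mpow P s) mone \<and> pm_eq (mpow Q t) mone"

lemma letter_mat_merge:
  assumes "proj_rep s t P Q" "isl x = isl y"
  shows "pm_eq (mmul (letter_mat P Q x) (letter_mat P Q y))
           (letter_mat P Q (fp_with_exp x ((fp_exp x + fp_exp y) mod fp_ord s t x)))"
proof -
  let ?M = "if isl x then P else Q"
  have "pm_eq (mpow ?M (fp_ord s t x)) mone"
    using assms(1) by (simp add: proj_rep_def fp_ord_def)
  then show ?thesis
    using mpow_mod[of ?M "fp_ord s t x" "fp_exp x + fp_exp y"] assms(2)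
    by (simp add: letter_mat_def mpow_add)
qed

lemma word_mat_ins:
  assumes "proj_rep s t P Q"
  shows "pm_eq (word_mat P Q (fp_ins s t x w)) (mmul (letter_mat P Q x) (word_mat P Q w))"
proof (cases w)
  case (Cons y w')
  show ?thesis
  proof (cases "isl x = isl y")
    case True
    let ?k = "(fp_exp x + fp_exp y) mod fp_ord s t x"
    have "pm_eq (mmul (letter_mat P Q x) (word_mat P Q w))
                (mmul (letter_mat P Q (fp_with_exp x ?k)) (word_mat P Q w'))"
      using pm_eq_mmul[OF letter_mat_merge[OF assms True] pm_eq_refl] Cons
      by (simp add: mmul_assoc)
    then show ?thesis
      using True Cons by (auto simp: fp_ins_Cons Let_def letter_mat_def intro: pm_eq_sym)
  qed (use Cons in \<open>simp add: fp_ins_Cons\<close>)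
qed simp

lemma word_mat_mult:
  assumes "proj_rep s t P Q"
  shows "pm_eq (word_mat P Q (fp_mult s t u v)) (mmul (word_mat P Q u) (word_mat P Q v))"
proof (induction u)
  case (Cons x u)
  have "pm_eq (word_mat P Q (fp_mult s t (x # u) v))
              (mmul (letter_mat P Q x) (word_mat P Q (fp_mult s t u v)))"
    using word_mat_ins[OF assms] by (simp add: fp_mult_def)
  also have "pm_eq \<dots> (mmul (letter_mat P Q x) (mmul (word_mat P Q u) (word_mat P Q v)))"
    by (rule pm_eq_mmul[OF pm_eq_refl Cons.IH])
  finally show ?case by (simp add: mmul_assoc)
qed (simp add: fp_mult_def)

definition proj_kernel :: "nat \<Rightarrow> nat \<Rightarrow> 'a::comm_ring_1 mat2 \<Rightarrow> 'a mat2 \<Rightarrow> (nat + nat) list set" where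
  "proj_kernel s t P Q = {g \<in> carrier (free_prod_cyclic s t). pm_eq (word_mat P Q g) mone}"

lemma word_mat_hom:
  fixes s t :: nat and G (structure)
  defines "G \<equiv> free_prod_cyclic s t"
  assumes "proj_rep s t P Q"
  shows "pm_eq (word_mat P Q (a \<otimes> b)) (mmul (word_mat P Q a) (word_mat P Q b))"
  using word_mat_mult[OF assms(2)] by (simp add: G_def free_prod_cyclic_def)

lemma word_mat_inv:
  fixes s t :: nat and G (structure)
  defines "G \<equiv> free_prod_cyclic s t"
  assumes "proj_rep s t P Q" "g \<in> carrier G"
  shows "pm_eq (mmul (word_mat P Q g) (word_mat P Q (inv g))) mone"
proof -
  interpret group G unfolding G_def by (rule fp_group)
  have "g \<otimes> inv g = \<one>" using assms(3) by simp
  then have "g \<otimes> inv g = []" by (simp add: G_def free_prod_cyclic_def)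
  then show ?thesis
    using word_mat_hom[OF assms(2), of g "inv g"] by (simp add: G_def pm_eq_sym)
qed

lemma word_mat_conj:
  fixes s t :: nat and G (structure)
  defines "G \<equiv> free_prod_cyclic s t"
  assumes rep: "proj_rep s t P Q" and g: "g \<in> carrier G" and h: "pm_eq (word_mat P Q h) mone"
  shows "pm_eq (word_mat P Q (g \<otimes> h \<otimes> inv g)) mone"
proof -
  let ?\<rho> = "word_mat P Q"
  have hom: "pm_eq (?\<rho> (a \<otimes> b)) (mmul (?\<rho> a) (?\<rho> b))" for a b
    using word_mat_hom[OF rep] by (simp add: G_def)
  have "pm_eq (?\<rho> (g \<otimes> h \<otimes> inv g)) (mmul (mmul (?\<rho> g) (?\<rho> h)) (?\<rho> (inv g)))"
    using hom pm_eq_mmul[OF hom pm_eq_refl] pm_eq_trans by blast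
  also have "pm_eq \<dots> (mmul (mmul (?\<rho> g) mone) (?\<rho> (inv g)))"
    using h by (intro pm_eq_mmul) simp_all
  also have "pm_eq \<dots> mone"
    using word_mat_inv[OF rep g[unfolded G_def]] by (simp add: G_def)
  finally show ?thesis .
qed

lemma proj_kernel_normal:
  fixes s t :: nat and G (structure)
  defines "G \<equiv> free_prod_cyclic s t"
  assumes rep: "proj_rep s t P Q"
  shows "proj_kernel s t P Q \<lhd> G"
proof -
  interpret group G unfolding G_def by (rule fp_group)
  let ?\<rho> = "word_mat P Q" and ?K = "proj_kernel s t P Q"
  have K: "?K = {g \<in> carrier G. pm_eq (?\<rho> g) mone}"
    by (simp add: proj_kernel_def G_def)
  have hom: "pm_eq (?\<rho> (a \<otimes> b)) (mmul (?\<rho> a) (?\<rho> b))" for a b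
    using word_mat_hom[OF rep] by (simp add: G_def)
  have "subgroup ?K G"
  proof (rule subgroupI)
    show "?K \<subseteq> carrier G" by (auto simp: K)
    have "[] \<in> ?K" by (simp add: K G_def free_prod_cyclic_def)
    then show "?K \<noteq> {}" by blast
  next
    fix a assume "a \<in> ?K"
    then have a: "a \<in> carrier G" "pm_eq (?\<rho> a) mone" by (auto simp: K)
    have "pm_eq (?\<rho> (inv a)) (mmul (?\<rho> a) (?\<rho> (inv a)))"
      using pm_eq_mmul[OF pm_eq_sym[OF a(2)] pm_eq_refl] by simp
    also have "pm_eq \<dots> mone"
      using word_mat_inv[OF rep a(1)[unfolded G_def]] by (simp add: G_def)
    finally show "inv a \<in> ?K" using a(1) by (simp add: K)
  next
    fix a b assume "a \<in> ?K" "b \<in> ?K"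
    then have ab: "a \<in> carrier G" "b \<in> carrier G" "pm_eq (?\<rho> a) mone" "pm_eq (?\<rho> b) mone"
      by (auto simp: K)
    have "pm_eq (?\<rho> (a \<otimes> b)) (mmul (?\<rho> a) (?\<rho> b))" by (rule hom)
    also have "pm_eq \<dots> (mmul mone mone)" using ab by (intro pm_eq_mmul)
    finally show "a \<otimes> b \<in> ?K" using ab by (simp add: K)
  qed
  moreover have "g \<otimes> h \<otimes> inv g \<in> ?K" if "g \<in> carrier G" "h \<in> ?K" for g h
  proof -
    have h: "h \<in> carrier G" "pm_eq (?\<rho> h) mone" using that(2) by (auto simp: K)
    then have "pm_eq (?\<rho> (g \<otimes> h \<otimes> inv g)) mone"
      using word_mat_conj[OF rep, of g h] that(1) by (simp add: G_def)
    then show ?thesis using h(1) that(1) by (simp add: K)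
  qed
  ultimately show ?thesis by (simp add: normal_inv_iff)
qed

lemma proj_kernel_proper:
  assumes "s > 1" "t > 1" "\<not> (pm_eq P mone \<and> pm_eq Q mone)"
  shows "proj_kernel s t P Q \<noteq> carrier (free_prod_cyclic s t)"
proof -
  have gens: "[Inl 1] \<in> carrier (free_prod_cyclic s t)" "[Inr 1] \<in> carrier (free_prod_cyclic s t)"
    using assms(1,2) by (simp_all add: free_prod_cyclic_def fp_reduced_def fp_letter_def)
  show ?thesis
  proof
    assume "proj_kernel s t P Q = carrier (free_prod_cyclic s t)"
    then have "pm_eq (word_mat P Q [Inl 1]) mone" "pm_eq (word_mat P Q [Inr 1]) mone"
      using gens unfolding proj_kernel_def by blast+
    then show False using assms(3) by simp
  qed
qed

lemma word_mat_pow: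
  assumes "proj_rep s t P Q" "g \<in> carrier (free_prod_cyclic s t)"
  shows "pm_eq (word_mat P Q (g [^]\<^bsub>free_prod_cyclic s t\<^esub> n)) (mpow (word_mat P Q g) n)"
proof (induction n)
  case (Suc n)
  have "pm_eq (word_mat P Q (g [^]\<^bsub>free_prod_cyclic s t\<^esub> Suc n))
              (mmul (word_mat P Q (g [^]\<^bsub>free_prod_cyclic s t\<^esub> n)) (word_mat P Q g))"
    using word_mat_mult[OF assms(1)] by (simp add: free_prod_cyclic_def)
  also have "pm_eq \<dots> (mpow (word_mat P Q g) (Suc n))"
    using pm_eq_mmul[OF Suc pm_eq_refl] by simp
  finally show ?case .
qed (simp add: free_prod_cyclic_def)

lemma mdet_word_mat: "mdet P = 1 \<Longrightarrow> mdet Q = 1 \<Longrightarrow> mdet (word_mat P Q w) = 1"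
  by (induction w) (simp_all add: letter_mat_def mdet_mpow)

section \<open>Roots of unity, q-numbers and Cayley-Hamilton\<close>

definition zeta :: "nat \<Rightarrow> complex" where
  "zeta n = exp (\<i> * of_real (pi / real n))"

lemma zeta_nonzero [simp]: "zeta n \<noteq> 0"
  by (simp add: zeta_def)

lemma zeta_pow: "zeta n ^ k = exp (\<i> * of_real (real k * pi / real n))"
proof -
  have "zeta n ^ k = exp (of_nat k * (\<i> * of_real (pi / real n)))"
    by (simp only: zeta_def exp_of_nat_mult)
  then show ?thesis by (simp add: field_simps)
qed

lemma zeta_pow_self: "n > 0 \<Longrightarrow> zeta n ^ n = -1"
  by (simp add: zeta_pow)

lemma zeta_pow_double_ne_1:
  assumes "0 < i" "i < n"
  shows "zeta n ^ (2 * i) \<noteq> 1"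
proof
  assume "zeta n ^ (2 * i) = 1"
  then obtain m :: int where "real (2 * i) * pi / real n = of_int (2 * m) * pi"
    by (auto simp: zeta_pow exp_eq_1)
  then have "real i = of_int m * real n" using assms by (simp add: field_simps)
  then have im: "int i = m * int n" by (metis of_int_eq_iff of_int_mult of_int_of_nat_eq)
  show False
  proof (cases "m \<le> 0")
    case True
    then have "m * int n \<le> 0" by (simp add: mult_nonpos_nonneg)
    then show False using im assms by simp
  next
    case False
    then have "1 * int n \<le> m * int n" by (intro mult_right_mono) simp_all
    then show False using im assms by linarith
  qed
qed

lemma zeta_square_ne_1: "n > 1 \<Longrightarrow> zeta n ^ 2 \<noteq> 1"
  using zeta_pow_double_ne_1[of 1 n] by simp

text \<open>The q-number [n]_u = (u^n - u^-n) / (u - u^-1); it is the off-diagonal entry of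
  powers of triangular matrices and the coefficient in the Cayley-Hamilton expansion.\<close>

definition qnum :: "complex \<Rightarrow> nat \<Rightarrow> complex" where
  "qnum u n = (u ^ n - inverse u ^ n) / (u - inverse u)"

lemma square_ne_1_iff: "u \<noteq> 0 \<Longrightarrow> u ^ 2 \<noteq> 1 \<longleftrightarrow> u \<noteq> inverse u"
  for u :: complex
  by (metis inverse_unique power2_eq_square right_inverse)

lemma qnum_add: "qnum u (a + b) = u ^ a * qnum u b + qnum u a * inverse u ^ b"
proof -
  have "qnum u (a + b) = (u^a * (u^b - inverse u^b) + (u^a - inverse u^a) * inverse u^b) / (u - inverse u)"
    by (simp add: qnum_def power_add algebra_simps)
  then show ?thesis
    by (simp add: qnum_def add_divide_distrib)
qed

lemma qnum_zero [simp]: "qnum u 0 = 0"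
  by (simp add: qnum_def)

lemma qnum_one: "u \<noteq> 0 \<Longrightarrow> u ^ 2 \<noteq> 1 \<Longrightarrow> qnum u 1 = 1"
  by (simp add: qnum_def square_ne_1_iff)

lemma qnum_nonzero:
  assumes "u \<noteq> 0" "u ^ 2 \<noteq> 1" "u ^ (2 * i) \<noteq> 1"
  shows "qnum u i \<noteq> 0"
proof -
  have "u ^ i \<noteq> inverse u ^ i"
    using square_ne_1_iff[of "u ^ i"] assms by (simp add: power_mult power_inverse mult.commute)
  then show ?thesis
    using assms(1,2) by (simp add: qnum_def square_ne_1_iff)
qed

lemma qnum_rec:
  assumes "z \<noteq> 0"
  shows "qnum z (Suc (Suc n)) = (z + inverse z) * qnum z (Suc n) - qnum z n"
proof -
  have "z ^ Suc (Suc n) - inverse z ^ Suc (Suc n)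
       = (z + inverse z) * (z ^ Suc n - inverse z ^ Suc n) - (z * inverse z) * (z ^ n - inverse z ^ n)"
    by (simp add: algebra_simps)
  then show ?thesis
    using assms by (simp add: qnum_def diff_divide_distrib[symmetric])
qed

text \<open>Cayley-Hamilton for a matrix M of determinant 1 and trace z + 1/z:
  M^(n+1) = [n+1]_z M - [n]_z.\<close>

lemma cayley_hamilton_step:
  fixes a b c d p q :: complex
  assumes "a * d - b * c = 1"
  shows "mmul (p * a - q, p * b, p * c, p * d - q) (a, b, c, d) =
    (((a + d) * p - q) * a - p, ((a + d) * p - q) * b, ((a + d) * p - q) * c, ((a + d) * p - q) * d - p)"
  using assms by simp Groebner_Basis.algebra

lemma mpow_trace_det:
  fixes a b c d z :: complex
  assumes z: "z \<noteq> 0" "z ^ 2 \<noteq> 1"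
    and det: "a * d - b * c = 1" and tr: "a + d = z + inverse z"
  shows "mpow (a, b, c, d) (Suc n) =
    (qnum z (Suc n) * a - qnum z n, qnum z (Suc n) * b, qnum z (Suc n) * c, qnum z (Suc n) * d - qnum z n)"
proof (induction n)
  case 0
  show ?case using qnum_one[OF z] by (simp add: mone_def)
next
  case (Suc n)
  have rec: "qnum z (Suc (Suc n)) = (a + d) * qnum z (Suc n) - qnum z n"
    using qnum_rec[OF z(1)] tr by simp
  show ?case
    using cayley_hamilton_step[OF det] by (simp only: mpow.simps(2)[of _ "Suc n"] Suc.IH rec)
qed

lemma mpow_eq_neg_one:
  fixes M :: "complex mat2"
  assumes r: "r > 1" and z: "z \<noteq> 0" "z ^ 2 \<noteq> 1" "z ^ r = -1"
    and M: "mdet M = 1" "mtrace M = z + inverse z"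
  shows "mpow M r = mneg mone"
proof -
  obtain n where rn: "r = Suc n" using r by (cases r) auto
  have zi: "z \<noteq> inverse z" using z(1,2) by (simp add: square_ne_1_iff)
  have izr: "inverse z ^ r = -1" using z(3) by (simp add: power_inverse)
  have q1: "qnum z r = 0" using z(3) izr by (simp add: qnum_def)
  have "z ^ n = - inverse z" "inverse z ^ n = - z"
    using z(1,3) izr rn by (simp_all add: field_simps)
  then have q0: "qnum z n = 1" using zi by (simp add: qnum_def)
  obtain a b c d where Md: "M = (a, b, c, d)" by (cases M rule: prod_cases4)
  show ?thesis
    using mpow_trace_det[OF z(1,2), of a d b c n] M q1 q0 rn Md by (simp add: mone_def)
qed

definition upper_gen :: "complex \<Rightarrow> complex mat2" where
  "upper_gen u = (u, 1, 0, inverse u)"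

definition lower_gen :: "complex \<Rightarrow> complex \<Rightarrow> complex mat2" where
  "lower_gen v lam = (v, 0, lam, inverse v)"

lemma mpow_upper_gen:
  assumes "u \<noteq> 0" "u ^ 2 \<noteq> 1"
  shows "mpow (upper_gen u) n = (u ^ n, qnum u n, 0, inverse u ^ n)"
proof (induction n)
  case (Suc n)
  then show ?case
    using qnum_add[of u n 1] qnum_one[OF assms] by (simp add: upper_gen_def)
qed (simp add: mone_def)

lemma mpow_lower_gen:
  assumes "v \<noteq> 0" "v ^ 2 \<noteq> 1"
  shows "mpow (lower_gen v lam) n = (v ^ n, 0, lam * qnum v n, inverse v ^ n)"
proof (induction n)
  case (Suc n)
  then show ?case
    using qnum_add[of v 1 n] qnum_one[OF assms] by (simp add: lower_gen_def algebra_simps)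
qed (simp add: mone_def)

lemma mdet_gens: "u \<noteq> 0 \<Longrightarrow> mdet (upper_gen u) = 1" "v \<noteq> 0 \<Longrightarrow> mdet (lower_gen v lam) = 1"
  by (simp_all add: upper_gen_def lower_gen_def)

lemma mpow_upper_gen_zeta: "s > 1 \<Longrightarrow> mpow (upper_gen (zeta s)) s = mneg mone"
  using zeta_pow_self[of s] by (simp add: mpow_upper_gen zeta_square_ne_1 qnum_def power_inverse mone_def)

lemma mpow_lower_gen_zeta: "t > 1 \<Longrightarrow> mpow (lower_gen (zeta t) lam) t = mneg mone"
  using zeta_pow_self[of t] by (simp add: mpow_lower_gen zeta_square_ne_1 qnum_def power_inverse mone_def)

section \<open>The trace is a nonconstant polynomial in lam\<close>

definition upper_letter_poly :: "complex \<Rightarrow> nat \<Rightarrow> complex poly mat2" where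
  "upper_letter_poly u i = ([:u ^ i:], [:qnum u i:], 0, [:inverse u ^ i:])"

definition lower_letter_poly :: "complex \<Rightarrow> nat \<Rightarrow> complex poly mat2" where
  "lower_letter_poly v j = ([:v ^ j:], 0, [:0, qnum v j:], [:inverse v ^ j:])"

definition word_poly :: "complex \<Rightarrow> complex \<Rightarrow> (nat + nat) list \<Rightarrow> complex poly mat2" where
  "word_poly u v w =
     foldr (\<lambda>x M. mmul (case_sum (upper_letter_poly u) (lower_letter_poly v) x) M) w mone"

lemma word_poly_simps [simp]:
  "word_poly u v [] = mone"
  "word_poly u v (Inl i # w) = mmul (upper_letter_poly u i) (word_poly u v w)"
  "word_poly u v (Inr j # w) = mmul (lower_letter_poly v j) (word_poly u v w)"
  by (simp_all add: word_poly_def)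

fun meval :: "complex \<Rightarrow> complex poly mat2 \<Rightarrow> complex mat2" where
  "meval lam (a, b, c, d) = (poly a lam, poly b lam, poly c lam, poly d lam)"

lemma meval_mmul: "meval lam (mmul A B) = mmul (meval lam A) (meval lam B)"
  by (cases A rule: prod_cases4; cases B rule: prod_cases4) simp

lemma meval_word_poly:
  assumes "u \<noteq> 0" "u ^ 2 \<noteq> 1" "v \<noteq> 0" "v ^ 2 \<noteq> 1"
  shows "meval lam (word_poly u v w) = word_mat (upper_gen u) (lower_gen v lam) w"
proof (induction w)
  case (Cons x w)
  then show ?case
    using assms by (cases x)
      (simp_all add: meval_mmul mpow_upper_gen mpow_lower_gen upper_letter_poly_def
        lower_letter_poly_def mult.commute)
qed (simp add: mone_def)

text \<open>Degree pattern of the image of an alternating word of length 2n, as a matrix of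
  polynomials in lam: the (1,1) entry has exact degree n, the (2,2) entry degree below n.\<close>

definition lead_shape :: "complex poly mat2 \<Rightarrow> nat \<Rightarrow> bool" where
  "lead_shape M n \<longleftrightarrow> (case M of (a, b, c, d) \<Rightarrow>
     degree a \<le> n \<and> coeff a n \<noteq> 0 \<and> degree b \<le> n - 1 \<and> (n = 0 \<longrightarrow> b = 0) \<and>
     degree c \<le> n \<and> degree d \<le> n - 1)"

lemma degree_mult_le_sum: "degree p \<le> k \<Longrightarrow> degree q \<le> m \<Longrightarrow> degree (p * q) \<le> k + m"
  by (meson add_le_mono degree_mult_le order_trans)

text \<open>Multiplying by the image of a pair a^i b^j raises this pattern by one.\<close>

lemma lead_shape_step:
  assumes shape: "lead_shape M n" and q: "q \<noteq> 0"
  shows "lead_shape (mmul ([:p, q:], [:e:], [:f, g:], [:h:]) M) (Suc n)"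
proof -
  obtain a b c d where M: "M = (a, b, c, d)" by (cases M rule: prod_cases4)
  have a: "degree a \<le> n" "coeff a n \<noteq> 0" and c: "degree c \<le> n"
    and b: "degree b \<le> n - 1" "n = 0 \<Longrightarrow> b = 0" and d: "degree d \<le> n - 1"
    using shape M by (auto simp: lead_shape_def)
  have const: "degree ([:k:] * y) \<le> m" if "degree y \<le> m" for k :: complex and y m
    using degree_mult_le_sum[OF _ that, of "[:k:]" 0] by simp
  have lin: "degree ([:k, l:] * y) \<le> Suc m" if "degree y \<le> m" for k l :: complex and y m
    using degree_mult_le_sum[OF _ that, of "[:k, l:]" 1] by simp
  have lin_b: "degree ([:k, l:] * b) \<le> n" for k l
    using lin[OF b(1), of k l] b(2) by (cases n) auto
  have d': "degree ([:k:] * d) \<le> n" for k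
    using order_trans[OF const[OF d] diff_le_self] .
  have "coeff a (Suc n) = 0" "coeff c (Suc n) = 0"
    using a(1) c by (simp_all add: coeff_eq_0)
  then have top_coeff: "coeff ([:p, q:] * a + [:e:] * c) (Suc n) = q * coeff a n"
    by (simp add: coeff_pCons)
  show ?thesis
    unfolding M lead_shape_def mmul.simps prod.case diff_Suc_1
  proof (intro conjI)
    show "degree ([:p, q:] * a + [:e:] * c) \<le> Suc n"
      by (rule degree_add_le[OF lin[OF a(1)] le_SucI[OF const[OF c]]])
    show "coeff ([:p, q:] * a + [:e:] * c) (Suc n) \<noteq> 0"
      unfolding top_coeff using q a(2) by simp
    show "degree ([:p, q:] * b + [:e:] * d) \<le> n"
      by (rule degree_add_le[OF lin_b d'])
    show "degree ([:f, g:] * a + [:h:] * c) \<le> Suc n"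
      by (rule degree_add_le[OF lin[OF a(1)] le_SucI[OF const[OF c]]])
    show "degree ([:f, g:] * b + [:h:] * d) \<le> n"
      by (rule degree_add_le[OF lin_b d'])
  qed simp
qed

lemma word_poly_lead_shape:
  assumes nzu: "\<And>i. 0 < i \<Longrightarrow> i < s \<Longrightarrow> qnum u i \<noteq> 0"
    and nzv: "\<And>j. 0 < j \<Longrightarrow> j < t \<Longrightarrow> qnum v j \<noteq> 0"
  shows "fp_reduced s t w \<Longrightarrow> w = [] \<or> (isl (hd w) \<and> \<not> isl (last w)) \<Longrightarrow>
    \<exists>n. length w = 2 * n \<and> lead_shape (word_poly u v w) n"
proof (induction w rule: induct_list012)
  case 1
  show ?case by (simp add: lead_shape_def mone_def)
next
  case (3 x y w)
  obtain i where x: "x = Inl i" using "3.prems"(2) by (cases x) auto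
  then obtain j where y: "y = Inr j"
    using "3.prems"(1) by (cases y) (auto simp: fp_reduced_Cons)
  have i: "0 < i" "i < s" and j: "0 < j" "j < t" and w: "fp_reduced s t w"
    and yw: "w = [] \<or> isl (hd w)"
    using "3.prems"(1) x y by (auto simp: fp_reduced_Cons fp_letter_def)
  have "w = [] \<or> (isl (hd w) \<and> \<not> isl (last w))"
    using yw "3.prems"(2) by auto
  then obtain n where n: "length w = 2 * n" "lead_shape (word_poly u v w) n"
    using "3.IH"(1)[OF w] by blast
  have "word_poly u v (x # y # w) =
    mmul ([:u ^ i * v ^ j, qnum u i * qnum v j:], [:qnum u i * inverse v ^ j:],
          [:0, inverse u ^ i * qnum v j:], [:inverse u ^ i * inverse v ^ j:]) (word_poly u v w)"
    by (simp add: x y upper_letter_poly_def lower_letter_poly_def mmul_assoc[symmetric] mult.commute)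
  then have "lead_shape (word_poly u v (x # y # w)) (Suc n)"
    using lead_shape_step[OF n(2)] nzu[OF i] nzv[OF j] by simp
  then show ?case using n(1) by (intro exI[of _ "Suc n"]) simp
qed simp

text \<open>So the trace of its image is a polynomial of degree n > 0 in lam, and by the
  fundamental theorem of algebra it attains every value.\<close>

lemma trace_word_mat_surj:
  assumes u: "u \<noteq> 0" "u ^ 2 \<noteq> 1" and v: "v \<noteq> 0" "v ^ 2 \<noteq> 1"
    and nzu: "\<And>i. 0 < i \<Longrightarrow> i < s \<Longrightarrow> qnum u i \<noteq> 0"
    and nzv: "\<And>j. 0 < j \<Longrightarrow> j < t \<Longrightarrow> qnum v j \<noteq> 0"
    and w: "fp_reduced s t w" "w \<noteq> []" "isl (hd w)" "\<not> isl (last w)"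
  shows "\<exists>lam. mtrace (word_mat (upper_gen u) (lower_gen v lam) w) = tau"
proof -
  obtain n where n: "length w = 2 * n" "lead_shape (word_poly u v w) n"
    using word_poly_lead_shape[OF nzu nzv w(1)] w(3,4) by blast
  have "n \<ge> 1" using n(1) w(2) by (cases n) auto
  obtain a b c d where P: "word_poly u v w = (a, b, c, d)"
    by (cases "word_poly u v w" rule: prod_cases4)
  have a: "coeff a n \<noteq> 0" and d: "degree d \<le> n - 1"
    using n(2) P by (auto simp: lead_shape_def)
  define T where "T = a + d - [:tau:]"
  have "coeff d n = 0" using d \<open>n \<ge> 1\<close> by (intro coeff_eq_0) auto
  moreover have "coeff [:tau:] n = 0" using \<open>n \<ge> 1\<close> by (cases n) auto
  ultimately have "coeff T n \<noteq> 0" using a by (simp add: T_def)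
  then have "n \<le> degree T" by (rule le_degree)
  then have "\<not> constant (poly T)" using \<open>n \<ge> 1\<close> by (simp add: constant_degree)
  then obtain lam where "poly T lam = 0" using fundamental_theorem_of_algebra by blast
  then have "mtrace (meval lam (word_poly u v w)) = tau" by (simp add: P T_def)
  then show ?thesis using meval_word_poly[OF u v] by metis
qed

lemma qnum_zeta_nonzero: "0 < i \<Longrightarrow> i < n \<Longrightarrow> qnum (zeta n) i \<noteq> 0"
  by (intro qnum_nonzero zeta_nonzero zeta_square_ne_1 zeta_pow_double_ne_1) auto

text \<open>For a cyclically reduced c of positive even length, choose lam so that the trace of
  the image of c is z + 1/z with z = zeta r; then the image of c^r is -1.  If c begins in
  C_t we rotate it, which does not change the trace.\<close>

lemma alternating_word_rep:
  assumes st: "s > 1" "t > 1" "r > 1"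
    and c: "fp_reduced s t c" "c \<noteq> []" "isl (hd c) \<noteq> isl (last c)"
  shows "\<exists>lam. mpow (word_mat (upper_gen (zeta s)) (lower_gen (zeta t) lam) c) r = mneg mone"
proof -
  let ?u = "zeta s" and ?v = "zeta t" and ?z = "zeta r"
  let ?W = "\<lambda>lam w. word_mat (upper_gen ?u) (lower_gen ?v lam) w"
  have u: "?u \<noteq> 0" "?u ^ 2 \<noteq> 1" and v: "?v \<noteq> 0" "?v ^ 2 \<noteq> 1"
    using st by (simp_all add: zeta_square_ne_1)
  have surj: "\<exists>lam. mtrace (?W lam w) = tau"
    if "fp_reduced s t w" "w \<noteq> []" "isl (hd w)" "\<not> isl (last w)" for w tau
  proof (rule trace_word_mat_surj[OF u v _ _ that])
    show "qnum ?u i \<noteq> 0" if "0 < i" "i < s" for i using that by (rule qnum_zeta_nonzero)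
    show "qnum ?v j \<noteq> 0" if "0 < j" "j < t" for j using that by (rule qnum_zeta_nonzero)
  qed
  have "\<exists>lam. mtrace (?W lam c) = ?z + inverse ?z"
  proof (cases "isl (hd c)")
    case True
    then show ?thesis using c by (intro surj) auto
  next
    case False
    then obtain x c1 where xc: "c = x # c1" and "c1 \<noteq> []"
      using c(2,3) False by (cases c) (auto split: if_splits)
    then have rot: "fp_reduced s t (c1 @ [x])" "isl (hd c1)"
      using c False by (auto simp: fp_reduced_Cons fp_reduced_snoc)
    have "mtrace (?W lam (c1 @ [x])) = mtrace (?W lam c)" for lam
      using mtrace_mmul_commute by (simp add: xc word_mat_append)
    moreover have "\<not> isl (last (c1 @ [x]))" "isl (hd (c1 @ [x]))"
      using False xc rot(2) \<open>c1 \<noteq> []\<close> by simp_all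
    ultimately show ?thesis
      using surj[OF rot(1)] by simp
  qed
  then obtain lam where tr: "mtrace (?W lam c) = ?z + inverse ?z" ..
  have "mdet (?W lam c) = 1" using u v by (intro mdet_word_mat mdet_gens)
  then have "mpow (?W lam c) r = mneg mone"
    using mpow_eq_neg_one[OF st(3) zeta_nonzero zeta_square_ne_1[OF st(3)] zeta_pow_self] tr st
    by simp
  then show ?thesis ..
qed

lemma upper_gen_nontrivial: "\<not> pm_eq (upper_gen u) mone"
  by (simp add: pm_eq_def upper_gen_def mone_def)

lemma lower_gen_nontrivial: "v ^ 2 \<noteq> 1 \<Longrightarrow> \<not> pm_eq (lower_gen v 0) mone"
  by (auto simp: pm_eq_def lower_gen_def mone_def)

lemma proj_rep_gens:
  assumes "s > 1" "t > 1"
  shows "proj_rep s t (upper_gen (zeta s)) (lower_gen (zeta t) lam)"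
    and "proj_rep s t (upper_gen (zeta s)) mone"
    and "proj_rep s t mone (lower_gen (zeta t) lam)"
  using assms by (simp_all add: proj_rep_def mpow_upper_gen_zeta mpow_lower_gen_zeta pm_eq_def)

text \<open>Every cyclically reduced c admits a nontrivial projective representation in which
  c^r is +-1.  Words of length at most one are killed by sending their factor to 1.\<close>

lemma cyclically_reduced_rep:
  assumes st: "s > 1" "t > 1" "r > 1"
    and c: "fp_reduced s t c" "fp_cyclically_reduced c"
  shows "\<exists>P Q :: complex mat2. proj_rep s t P Q \<and> \<not> (pm_eq P mone \<and> pm_eq Q mone) \<and>
           pm_eq (mpow (word_mat P Q c) r) mone"
proof (cases "c \<noteq> [] \<and> isl (hd c) \<noteq> isl (last c)")
  case True
  then obtain lam where "mpow (word_mat (upper_gen (zeta s)) (lower_gen (zeta t) lam) c) r = mneg mone"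
    using alternating_word_rep[OF st c(1)] by blast
  then show ?thesis
    using proj_rep_gens(1)[OF st(1,2)] upper_gen_nontrivial by (metis pm_eq_def)
next
  case False
  then have "length c \<le> 1" using c(2) by (auto simp: fp_cyclically_reduced_def)
  then consider "c = []" | j where "c = [Inr j]" | i where "c = [Inl i]"
    by (cases c; cases "hd c") auto
  then show ?thesis
  proof cases
    case 3
    then show ?thesis
      using proj_rep_gens(3)[OF st(1,2)] lower_gen_nontrivial zeta_square_ne_1[OF st(2)] by fastforce
  qed (use proj_rep_gens(2)[OF st(1,2)] upper_gen_nontrivial in fastforce)+
qed

text \<open>Write w as a conjugate of a cyclically reduced c and take the representation for c.
  Its kernel is a proper normal subgroup containing c^r, hence w^r, hence the normal closure.\<close>

theorem mainTheorem18:
  fixes s t r :: nat and w :: "(nat + nat) list"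
  assumes "s > 1" and "t > 1" and "r > 1"
    and "w \<in> carrier (free_prod_cyclic s t)"
  shows "normal_closure (free_prod_cyclic s t) {w [^]\<^bsub>free_prod_cyclic s t\<^esub> r}
           \<noteq> carrier (free_prod_cyclic s t)"
proof -
  let ?G = "free_prod_cyclic s t"
  interpret G: group ?G by (rule fp_group)
  obtain g c where g: "g \<in> carrier ?G" and c: "c \<in> carrier ?G" "fp_cyclically_reduced c"
    and w: "w = g \<otimes>\<^bsub>?G\<^esub> c \<otimes>\<^bsub>?G\<^esub> inv\<^bsub>?G\<^esub> g"
    using fp_conj_cyclically_reduced[OF assms(4)] by blast
  have "fp_reduced s t c" using c(1) by (simp add: free_prod_cyclic_def)
  then obtain P Q :: "complex mat2" where rep: "proj_rep s t P Q"
    and nontrivial: "\<not> (pm_eq P mone \<and> pm_eq Q mone)"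
    and cr: "pm_eq (mpow (word_mat P Q c) r) mone"
    using cyclically_reduced_rep[OF assms(1-3) _ c(2)] by blast
  let ?N = "proj_kernel s t P Q"
  have N: "?N \<lhd> ?G" by (rule proj_kernel_normal[OF rep])
  have "c [^]\<^bsub>?G\<^esub> r \<in> ?N"
    using pm_eq_trans[OF word_mat_pow[OF rep c(1)] cr] c(1) by (simp add: proj_kernel_def)
  then have "w [^]\<^bsub>?G\<^esub> r \<in> ?N"
    using normal.inv_op_closed2[OF N g] by (simp add: w G.conj_nat_pow g c(1))
  then have "normal_closure ?G {w [^]\<^bsub>?G\<^esub> r} \<subseteq> ?N"
    by (intro normal_closure_subset[OF G.is_group N]) simp
  moreover have "?N \<subseteq> carrier ?G" "?N \<noteq> carrier ?G"
    using proj_kernel_proper[OF assms(1,2) nontrivial] by (auto simp: proj_kernel_def)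
  ultimately show ?thesis by blast
qed

end
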